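(* Let $k$ be a positive integer and $G_1,\dots,G_m$ finite subgraphs of $\mathsf{Path}_{\mathbb Z}$ with $G_1\cup\dots\cup G_m=\mathsf{Path}_k$, and let $g:=\mathrm{gap}(G_1,\dots,G_m)$. Then there exists a shift permutation $\sigma$ of $[m]$ such that \[\vec\lambda(G_{\sigma(1)},\dots,G_{\sigma(m)})\ge\frac{g-\max\{\lambda(G_1),\dots,\lambda(G_m)\}}{2}.\]
   Context: Graphs are finite simple graphs without isolated vertices; $\emptyset$ is the empty graph. $\mathsf{Path}_{\mathbb Z}$ has vertex set $\mathbb Z$ and edges $\{i-1,i\}$; for integers $s<t$, $\mathsf{Path}_{s,t}$ has vertices $s,\dots,t$ and edges $\{i-1,i\}$, $s<i\le t$; $\mathsf{Path}_k=\mathsf{Path}_{0,k}$. $\Delta(G)$ = number of connected components; $\lambda(G)$ = maximum number of edges in a component ($0$ for $\emptyset$); $G\ominus F$ = union of components of $G$ sharing no vertex with $F$. $\vec\Delta(H_1,\dots,H_r)=\sum_l\Delta(H_l\ominus(H_1\cup\dots\cup H_{l-1}))$, $\vec\lambda(H_1,\dots,H_r)=\sum_l\lambda(H_l\ominus(H_1\cup\dots\cup H_{l-1}))$. A shift permutation is a permutation $\sigma$ of $[m]$ with $\sigma(j)\ge j-1$ for all $j$. Gap: let $c=\vec\Delta(G_1,\dots,G_m)$ and $0\le s_1<t_1<\dots<s_c<t_c\le k$ the integers with $\bigcup_{j=1}^m\big(G_j\ominus(G_1\cup\dots\cup G_{j-1})\big)=\bigcup_{i=1}^c\mathsf{Path}_{s_i,t_i}$;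 $\mathrm{gap}(G_1,\dots,G_m):=\max_{y\in[0,k]}\min_{i}\big|\frac{s_i+t_i}{2}-y\big|$. *)

theory Defs
  imports Complex_Main "HOL-Combinatorics.Permutations"
begin

text \<open>A graph without isolated vertices is represented by its edge set; an edge is a
  two-element set of vertices. Vertices are integers.\<close>

type_synonym graph = "int set set"

definition PathZ :: graph where
  "PathZ = {{i - 1, i} | i. True}"

definition Path_st :: "int \<Rightarrow> int \<Rightarrow> graph" where
  "Path_st s t = {{i - 1, i} | i. s < i \<and> i \<le> t}"

definition Path_k :: "nat \<Rightarrow> graph" where
  "Path_k k = Path_st 0 (int k)"

definition verts :: "graph \<Rightarrow> int set" where
  "verts E = \<Union>E"

definition adj :: "graph \<Rightarrow> int \<Rightarrow> int \<Rightarrow> bool" where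
  "adj E u v \<longleftrightarrow> {u, v} \<in> E"

definition comps :: "graph \<Rightarrow> graph set" where
  "comps E = (\<lambda>v. {e \<in> E. \<forall>w\<in>e. (adj E)\<^sup>*\<^sup>* v w}) ` verts E"

definition Delta :: "graph \<Rightarrow> nat" where
  "Delta E = card (comps E)"

definition lam :: "graph \<Rightarrow> nat" where
  "lam E = Max (insert 0 (card ` comps E))"

definition ominus :: "graph \<Rightarrow> graph \<Rightarrow> graph" where
  "ominus G F = \<Union>{C \<in> comps G. verts C \<inter> verts F = {}}"

definition reduced :: "(nat \<Rightarrow> graph) \<Rightarrow> nat \<Rightarrow> graph" where
  "reduced H l = ominus (H l) (\<Union>j\<in>{1..<l}. H j)"

definition vDelta :: "(nat \<Rightarrow> graph) \<Rightarrow> nat \<Rightarrow> nat" where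
  "vDelta H m = (\<Sum>l = 1..m. Delta (reduced H l))"

definition vlam :: "(nat \<Rightarrow> graph) \<Rightarrow> nat \<Rightarrow> nat" where
  "vlam H m = (\<Sum>l = 1..m. lam (reduced H l))"

definition shift_perm :: "nat \<Rightarrow> (nat \<Rightarrow> nat) \<Rightarrow> bool" where
  "shift_perm m \<sigma> \<longleftrightarrow> \<sigma> permutes {1..m} \<and> (\<forall>j\<in>{1..m}. \<sigma> j \<ge> j - 1)"

text \<open>Gap: the union of the reduced graphs is a disjoint union of paths
  Path_{s_i,t_i} (its components); gap = max over y in [0,k] of the distance from y
  to the nearest midpoint (s_i+t_i)/2.\<close>
definition midpt :: "graph \<Rightarrow> real" where
  "midpt C = (real_of_int (Min (verts C)) + real_of_int (Max (verts C))) / 2"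

definition gap :: "nat \<Rightarrow> (nat \<Rightarrow> graph) \<Rightarrow> nat \<Rightarrow> real" where
  "gap k G m = (SUP y\<in>{0..real k}. INF C\<in>comps (\<Union>j\<in>{1..m}. reduced G j). \<bar>midpt C - y\<bar>)"

end

theory Submission
  imports Defs
begin

text \<open>Let \<open>R\<close> be the union of the reduced graphs and \<open>M n = best_vlam G n\<close> the largest
  value of \<open>vlam\<close> over shift permutations of \<open>[n]\<close>. If the vertex \<open>v\<close> first occurs in \<open>G T\<close>, some
  component \<open>C\<close> of \<open>R\<close> has \<open>|v - midpt C| \<le> M T + M (T - 1) + |C| / 2\<close>, by induction on \<open>T\<close>:
  if the component \<open>D\<close> of \<open>v\<close> in \<open>G T\<close> avoids all earlier graphs, it is itself a component
  of \<open>R\<close>; otherwise let \<open>G T'\<close> be the first earlier graph meeting \<open>D\<close>, at a vertex \<open>v'\<close>.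
  Placing \<open>G T\<close> at position \<open>T'\<close>, behind an optimal order of \<open>G 1, \<dots>, G (T' - 1)\<close>, is a shift
  permutation that gains \<open>|D| \<ge> |v - v'|\<close>, so \<open>M (T' - 1) + |v - v'| \<le> M T\<close>, and
  \<open>M T' \<le> M (T - 1)\<close>. Rounding a point of \<open>[0, k]\<close> to a vertex then gives
  \<open>gap \<le> 2 M m + max \<lambda>(G j)\<close>.\<close>

definition component :: "graph \<Rightarrow> int \<Rightarrow> graph" where
  "component E v = {e \<in> E. \<forall>w\<in>e. (adj E)\<^sup>*\<^sup>* v w}"

lemma comps_eq: "comps E = component E ` verts E"
  by (simp add: comps_def component_def)

lemma component_in_comps: "x \<in> verts E \<Longrightarrow> component E x \<in> comps E"
  by (simp add: comps_eq)

lemma comps_subset: "C \<in> comps E \<Longrightarrow> C \<subseteq> E"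
  by (auto simp: comps_eq component_def)

lemma verts_UN: "verts (\<Union>j\<in>A. G j) = (\<Union>j\<in>A. verts (G j))"
  by (auto simp: verts_def)

lemma verts_mono: "A \<subseteq> B \<Longrightarrow> verts A \<subseteq> verts B"
  by (auto simp: verts_def)

lemma reachable_sym: "(adj E)\<^sup>*\<^sup>* a b \<Longrightarrow> (adj E)\<^sup>*\<^sup>* b a"
proof -
  have "symp (adj E)" by (rule sympI) (simp add: adj_def insert_commute)
  then show "(adj E)\<^sup>*\<^sup>* a b \<Longrightarrow> (adj E)\<^sup>*\<^sup>* b a" by (rule sympD[OF symp_rtranclp])
qed

lemma reachable_of_mem_verts_component: "u \<in> verts (component E x) \<Longrightarrow> (adj E)\<^sup>*\<^sup>* x u"
  by (auto simp: verts_def component_def)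

lemma card_le_lam: "finite E \<Longrightarrow> C \<in> comps E \<Longrightarrow> card C \<le> lam E"
proof -
  assume "finite E" and C: "C \<in> comps E"
  then have "finite (comps E)" using comps_subset by (metis Pow_iff finite_Pow_iff finite_subset subsetI)
  then show ?thesis unfolding lam_def using C by (intro Max_ge) auto
qed

lemma reachable_along_edges:
  assumes "\<And>i. a \<le> i \<Longrightarrow> i < b \<Longrightarrow> {i, i + 1} \<in> E"
  shows "a \<le> i \<Longrightarrow> i \<le> b \<Longrightarrow> (adj E)\<^sup>*\<^sup>* a i"
proof (induction i rule: int_ge_induct)
  case (step i)
  then have "adj E i (i + 1)" using assms by (simp add: adj_def)
  with step show ?case by auto
qed simp

lemma PathZ_edge: "e \<in> PathZ \<Longrightarrow> x \<in> e \<Longrightarrow> \<exists>y. e = {x, y} \<and> (y = x + 1 \<or> y = x - 1)"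
  by (auto simp: PathZ_def)

lemma PathZ_doubleton: "{b, c} \<in> PathZ \<Longrightarrow> c = b + 1 \<or> c = b - 1"
  by (auto simp: PathZ_def doubleton_eq_iff)

lemma empty_notin_PathZ: "{} \<notin> PathZ"
  by (auto simp: PathZ_def)

lemma mem_verts_component:
  assumes "G \<subseteq> PathZ" "x \<in> verts G" "(adj G)\<^sup>*\<^sup>* x b"
  shows "b \<in> verts (component G x)"
  using assms(3)
proof (induction rule: rtranclp_induct)
  case base
  from assms(2) obtain e where e: "e \<in> G" "x \<in> e" by (auto simp: verts_def)
  with assms(1) obtain y where "e = {x, y}" using PathZ_edge by blast
  with e have "e \<in> component G x" by (auto simp: component_def adj_def)
  with e show ?case by (auto simp: verts_def)
next
  case (step b c)
  have "(adj G)\<^sup>*\<^sup>* x c" using step.hyps by (rule rtranclp.rtrancl_into_rtrancl)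
  with step.hyps have "{b, c} \<in> component G x" by (auto simp: component_def adj_def)
  then show ?case by (auto simp: verts_def)
qed

lemma reachable_interval_edges:
  assumes "G \<subseteq> PathZ" and "(adj G)\<^sup>*\<^sup>* a b"
  shows "min a b \<le> i \<Longrightarrow> i < max a b \<Longrightarrow> {i, i + 1} \<in> G"
  using assms(2)
proof (induction arbitrary: i rule: rtranclp_induct)
  case (step b c)
  have e: "{b, c} \<in> G" using step.hyps(2) by (simp add: adj_def)
  then have bc: "c = b + 1 \<or> c = b - 1" using assms(1) PathZ_doubleton by blast
  then have "(min a b \<le> i \<and> i < max a b) \<or> i = min b c" using step.prems by auto
  then show ?case
  proof
    assume "i = min b c"
    then have "{i, i + 1} = {b, c}" using bc by auto
    then show ?thesis using e by simp
  qed (use step.IH in auto)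
qed simp

lemma diff_le_card_comp:
  assumes "G \<subseteq> PathZ" "finite G" "C \<in> comps G" "u \<in> verts C" "w \<in> verts C" "u \<le> w"
  shows "w - u \<le> int (card C)"
proof -
  obtain x where C: "C = component G x" using assms(3) by (auto simp: comps_eq)
  have xu: "(adj G)\<^sup>*\<^sup>* x u" and xw: "(adj G)\<^sup>*\<^sup>* x w"
    using assms(4,5) C reachable_of_mem_verts_component by blast+
  have edges: "{i, i + 1} \<in> G" if "u \<le> i" "i < w" for i
    using reachable_interval_edges[OF assms(1) rtranclp_trans[OF reachable_sym[OF xu] xw]] that assms(6)
    by auto
  have sub: "(\<lambda>i. {i, i + 1}) ` {u..<w} \<subseteq> C"
  proof
    fix e assume "e \<in> (\<lambda>i. {i, i + 1}) ` {u..<w}"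
    then obtain i where i: "u \<le> i" "i < w" "e = {i, i + 1}" by auto
    have "(adj G)\<^sup>*\<^sup>* x i" "(adj G)\<^sup>*\<^sup>* x (i + 1)"
      using rtranclp_trans[OF xu reachable_along_edges[OF edges]] i by auto
    then show "e \<in> C" using edges[OF i(1,2)] i(3) C by (auto simp: component_def)
  qed
  have "inj_on (\<lambda>i::int. {i, i + 1}) {u..<w}"
    by (auto simp: inj_on_def doubleton_eq_iff)
  moreover have "finite C" using assms(2,3) comps_subset finite_subset by blast
  ultimately have "card {u..<w} \<le> card C"
    using card_mono[OF _ sub] card_image by fastforce
  then show ?thesis by simp
qed

lemma dist_le_card_comp:
  assumes "G \<subseteq> PathZ" "finite G" "C \<in> comps G" "u \<in> verts C" "w \<in> verts C"
  shows "\<bar>u - w\<bar> \<le> int (card C)"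
  using diff_le_card_comp[OF assms] diff_le_card_comp[OF assms(1-3,5,4)] by linarith

lemma dist_midpt_le:
  assumes "G \<subseteq> PathZ" "finite G" "C \<in> comps G" "v \<in> verts C"
  shows "\<bar>real_of_int v - midpt C\<bar> \<le> real (card C) / 2"
proof -
  have "C \<subseteq> G" using assms(3) by (rule comps_subset)
  then have "finite (verts C)"
    using assms(1,2) finite_subset unfolding verts_def
    by (intro finite_Union) (auto simp: PathZ_def)
  moreover have "verts C \<noteq> {}" using assms(4) by blast
  ultimately have lo: "Min (verts C) \<in> verts C" "Min (verts C) \<le> v"
    and hi: "Max (verts C) \<in> verts C" "v \<le> Max (verts C)"
    using assms(4) by simp_all
  then have "Max (verts C) - Min (verts C) \<le> int (card C)"
    using diff_le_card_comp[OF assms(1-3) lo(1) hi(1)] by simp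
  with lo(2) hi(2) show ?thesis
    unfolding midpt_def by (simp add: abs_le_iff field_simps flip: of_int_le_iff)
qed

lemma comps_transfer:
  assumes "G \<subseteq> PathZ" "R \<subseteq> PathZ" "C \<in> comps G" "C \<subseteq> R"
    and closed: "\<And>e. e \<in> R \<Longrightarrow> e \<inter> verts C \<noteq> {} \<Longrightarrow> e \<in> G"
  shows "C \<in> comps R"
proof -
  obtain x where x: "x \<in> verts G" and C: "C = component G x"
    using assms(3) by (auto simp: comps_eq)
  have xR: "x \<in> verts R"
    using mem_verts_component[OF assms(1) x] C assms(4) verts_mono by blast
  have G_to_R: "(adj R)\<^sup>*\<^sup>* x w" if "(adj G)\<^sup>*\<^sup>* x w" for w
    using that
  proof (induction rule: rtranclp_induct)
    case (step b c)
    have "(adj G)\<^sup>*\<^sup>* x c" using step.hyps by (rule rtranclp.rtrancl_into_rtrancl)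
    with step.hyps have "{b, c} \<in> C" by (auto simp: C component_def adj_def)
    with assms(4) have "adj R b c" by (auto simp: adj_def)
    with step.IH show ?case by simp
  qed simp
  have R_to_G: "(adj G)\<^sup>*\<^sup>* x w" if "(adj R)\<^sup>*\<^sup>* x w" for w
    using that
  proof (induction rule: rtranclp_induct)
    case (step b c)
    have "b \<in> verts C" using mem_verts_component[OF assms(1) x step.IH] C by simp
    with step.hyps(2) closed have "adj G b c" by (auto simp: adj_def)
    with step.IH show ?case by simp
  qed simp
  have "component R x = C"
  proof
    show "component R x \<subseteq> C"
    proof
      fix e assume e: "e \<in> component R x"
      then have eR: "e \<in> R" and reach: "\<forall>w\<in>e. (adj G)\<^sup>*\<^sup>* x w"
        using R_to_G by (auto simp: component_def)
      have "e \<noteq> {}" using eR assms(2) empty_notin_PathZ by blast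
      then obtain w where w: "w \<in> e" by blast
      then have "w \<in> verts C" using mem_verts_component[OF assms(1) x] reach C by blast
      with eR w closed have "e \<in> G" by blast
      with reach show "e \<in> C" by (auto simp: C component_def)
    qed
    show "C \<subseteq> component R x" using assms(4) G_to_R by (auto simp: C component_def)
  qed
  with component_in_comps[OF xR] show ?thesis by simp
qed

lemma ominus_subset: "ominus G F \<subseteq> G"
  by (auto simp: ominus_def dest: comps_subset)

lemma card_le_lam_ominus:
  assumes "G \<subseteq> PathZ" "finite G" "C \<in> comps G" "verts C \<inter> verts F = {}"
  shows "card C \<le> lam (ominus G F)"
proof -
  have "C \<in> comps (ominus G F)"
  proof (rule comps_transfer[OF assms(1) _ assms(3)])
    show "ominus G F \<subseteq> PathZ" using ominus_subset assms(1) by blast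
    show "C \<subseteq> ominus G F" using assms(3,4) by (auto simp: ominus_def)
  qed (use ominus_subset in blast)
  then show ?thesis using card_le_lam assms(2) ominus_subset finite_subset by metis
qed

lemma comps_reduced_union:
  assumes paths: "\<And>j. j \<in> {1..m} \<Longrightarrow> G j \<subseteq> PathZ"
    and T: "T \<in> {1..m}" and C: "C \<in> comps (G T)"
    and new: "verts C \<inter> verts (\<Union>j\<in>{1..<T}. G j) = {}"
  shows "C \<in> comps (\<Union>j\<in>{1..m}. reduced G j)"
proof (rule comps_transfer[OF paths[OF T] _ C])
  show "(\<Union>j\<in>{1..m}. reduced G j) \<subseteq> PathZ"
    using paths ominus_subset by (fastforce simp: reduced_def)
  show "C \<subseteq> (\<Union>j\<in>{1..m}. reduced G j)"
    using C new T by (auto simp: reduced_def ominus_def)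
next
  fix e assume "e \<in> (\<Union>j\<in>{1..m}. reduced G j)" and meets: "e \<inter> verts C \<noteq> {}"
  then obtain j D where j: "j \<in> {1..m}" and D: "D \<in> comps (G j)" "e \<in> D"
    and D_new: "verts D \<inter> verts (\<Union>i\<in>{1..<j}. G i) = {}"
    unfolding reduced_def ominus_def by blast
  obtain b where b: "b \<in> verts C" "b \<in> verts D" using meets D(2) by (auto simp: verts_def)
  have bT: "b \<in> verts (G T)" and bj: "b \<in> verts (G j)"
    using b verts_mono comps_subset C D(1) by blast+
  have "j \<notin> {1..<T}" using new b(1) bj unfolding verts_UN by blast
  moreover have "T \<notin> {1..<j}" using D_new b(2) bT unfolding verts_UN by blast
  ultimately have "j = T" using j T by auto
  then show "e \<in> G T" using D comps_subset by blast
qed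

lemma shift_perm_mono:
  assumes "shift_perm n \<sigma>" "n \<le> n'"
  shows "shift_perm n' \<sigma>"
proof -
  have "\<sigma> permutes {1..n'}"
    using assms permutes_subset[of \<sigma> "{1..n}" "{1..n'}"] by (auto simp: shift_perm_def)
  moreover have "\<sigma> j = j" if "j \<notin> {1..n}" for j
    using assms(1) that by (auto simp: shift_perm_def permutes_not_in)
  ultimately show ?thesis using assms(1) unfolding shift_perm_def by (metis diff_le_self)
qed

lemma vlam_mono: "n \<le> n' \<Longrightarrow> vlam H n \<le> vlam H n'"
  unfolding vlam_def by (intro sum_mono2) auto

text \<open>\<open>G \<circ> (bring_forward a b \<circ> \<pi>)\<close> lists \<open>G b\<close> at position \<open>a\<close> and moves the graphs at
  positions \<open>a, \<dots>, b - 1\<close> one step later.\<close>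
definition bring_forward :: "nat \<Rightarrow> nat \<Rightarrow> nat \<Rightarrow> nat" where
  "bring_forward a b j = (if j = a then b else if a < j \<and> j \<le> b then j - 1 else j)"

lemma bring_forward_permutes: "a \<le> b \<Longrightarrow> bring_forward a b permutes {a..b}"
proof (rule bij_imp_permutes)
  assume "a \<le> b"
  then show "bij_betw (bring_forward a b) {a..b} {a..b}"
    by (intro bij_betw_byWitness[where f'="\<lambda>j. if j = b then a else if a \<le> j \<and> j < b then j + 1 else j"])
       (auto simp: bring_forward_def)
qed (auto simp: bring_forward_def)

lemma
  assumes "shift_perm (a - 1) \<pi>" "1 \<le> a" "a \<le> b"
  shows bring_forward_below: "j < a \<Longrightarrow> bring_forward a b (\<pi> j) = \<pi> j"
    and bring_forward_at: "bring_forward a b (\<pi> a) = b"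
    and shift_perm_bring_forward: "shift_perm b (bring_forward a b \<circ> \<pi>)"
proof -
  have \<pi>: "\<pi> permutes {1..a - 1}" using assms(1) by (simp add: shift_perm_def)
  have fix_\<pi>: "\<pi> j = j" if "j \<notin> {1..a - 1}" for j using \<pi> that by (simp add: permutes_not_in)
  show below: "bring_forward a b (\<pi> j) = \<pi> j" if "j < a" for j
  proof (cases "j \<in> {1..a - 1}")
    case True
    then have "\<pi> j \<in> {1..a - 1}" using permutes_in_image[OF \<pi>] by blast
    then show ?thesis by (auto simp: bring_forward_def)
  qed (use that fix_\<pi> in \<open>auto simp: bring_forward_def\<close>)
  show "bring_forward a b (\<pi> a) = b" using fix_\<pi>[of a] assms(2) by (simp add: bring_forward_def)
  have "bring_forward a b \<circ> \<pi> permutes {1..b}"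
  proof (rule permutes_compose)
    show "\<pi> permutes {1..b}" by (rule permutes_subset[OF \<pi>]) (use assms(3) in auto)
    show "bring_forward a b permutes {1..b}"
      using permutes_subset[OF bring_forward_permutes[OF assms(3)]] assms(2) by auto
  qed
  moreover have "(bring_forward a b \<circ> \<pi>) j \<ge> j - 1" if "j \<in> {1..b}" for j
  proof (cases "j < a")
    case True
    with assms(1) that show ?thesis by (auto simp: below shift_perm_def)
  next
    case False
    then have "\<pi> j = j" by (intro fix_\<pi>) auto
    with False that show ?thesis by (auto simp: bring_forward_def)
  qed
  ultimately show "shift_perm b (bring_forward a b \<circ> \<pi>)" by (simp add: shift_perm_def)
qed

lemma vlam_bring_forward:
  assumes "shift_perm (a - 1) \<pi>" "1 \<le> a" "a \<le> b"
  shows "vlam (G \<circ> \<pi>) (a - 1) + lam (ominus (G b) (\<Union>j\<in>{1..<a}. G j))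
    \<le> vlam (G \<circ> (bring_forward a b \<circ> \<pi>)) b"
proof -
  let ?\<sigma> = "bring_forward a b \<circ> \<pi>"
  have same: "(G \<circ> ?\<sigma>) j = (G \<circ> \<pi>) j" if "j < a" for j
    using bring_forward_below[OF assms that] by simp
  have "{1..<a} = {1..a - 1}" using assms(2) by auto
  moreover have "\<pi> permutes {1..a - 1}" using assms(1) by (simp add: shift_perm_def)
  ultimately have \<pi>_image: "\<pi> ` {1..<a} = {1..<a}" by (simp add: permutes_image)
  have "(\<Union>j\<in>{1..<a}. (G \<circ> ?\<sigma>) j) = (\<Union>j\<in>{1..<a}. (G \<circ> \<pi>) j)"
    using same by (intro SUP_cong) auto
  also have "\<dots> = \<Union> (G ` \<pi> ` {1..<a})" by (simp add: image_comp)
  finally have at_a: "reduced (G \<circ> ?\<sigma>) a = ominus (G b) (\<Union>j\<in>{1..<a}. G j)"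
    unfolding reduced_def \<pi>_image using bring_forward_at[OF assms] by simp
  have "reduced (G \<circ> ?\<sigma>) l = reduced (G \<circ> \<pi>) l" if "l \<le> a - 1" for l
  proof -
    have "(\<Union>j\<in>{1..<l}. (G \<circ> ?\<sigma>) j) = (\<Union>j\<in>{1..<l}. (G \<circ> \<pi>) j)"
      by (intro SUP_cong refl same) (use that in auto)
    moreover have "(G \<circ> ?\<sigma>) l = (G \<circ> \<pi>) l" by (rule same) (use that assms(2) in arith)
    ultimately show ?thesis by (simp only: reduced_def)
  qed
  then have "vlam (G \<circ> \<pi>) (a - 1) = vlam (G \<circ> ?\<sigma>) (a - 1)"
    unfolding vlam_def by (intro sum.cong) auto
  moreover have "vlam (G \<circ> ?\<sigma>) (a - 1) + lam (reduced (G \<circ> ?\<sigma>) a) = vlam (G \<circ> ?\<sigma>) a"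
    using assms(2) unfolding vlam_def by (cases a) simp_all
  moreover have "vlam (G \<circ> ?\<sigma>) a \<le> vlam (G \<circ> ?\<sigma>) b" using assms(3) by (rule vlam_mono)
  ultimately show ?thesis unfolding at_a by linarith
qed

definition best_vlam :: "(nat \<Rightarrow> graph) \<Rightarrow> nat \<Rightarrow> nat" where
  "best_vlam G n = Max ((\<lambda>\<sigma>. vlam (G \<circ> \<sigma>) n) ` Collect (shift_perm n))"

lemma finite_shift_perms: "finite (Collect (shift_perm n))"
  by (rule finite_subset[OF _ finite_permutations[of "{1..n}"]]) (auto simp: shift_perm_def)

lemma shift_perm_id: "shift_perm n id"
  by (simp add: shift_perm_def permutes_id)

lemma vlam_le_best_vlam: "shift_perm n \<sigma> \<Longrightarrow> vlam (G \<circ> \<sigma>) n \<le> best_vlam G n"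
  unfolding best_vlam_def using finite_shift_perms by (intro Max_ge) auto

lemma best_vlam_attained: "\<exists>\<sigma>. shift_perm n \<sigma> \<and> vlam (G \<circ> \<sigma>) n = best_vlam G n"
proof -
  have "best_vlam G n \<in> (\<lambda>\<sigma>. vlam (G \<circ> \<sigma>) n) ` Collect (shift_perm n)"
    unfolding best_vlam_def using finite_shift_perms shift_perm_id by (intro Max_in) auto
  then show ?thesis by auto
qed

lemma best_vlam_mono: "n \<le> n' \<Longrightarrow> best_vlam G n \<le> best_vlam G n'"
  using best_vlam_attained[of n G] vlam_mono vlam_le_best_vlam shift_perm_mono
  by (metis le_trans)

lemma best_vlam_bring_forward:
  assumes "1 \<le> a" "a \<le> b" "G b \<subseteq> PathZ" "finite (G b)" "C \<in> comps (G b)"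
    and "verts C \<inter> verts (\<Union>j\<in>{1..<a}. G j) = {}"
  shows "best_vlam G (a - 1) + card C \<le> best_vlam G b"
proof -
  obtain \<pi> where \<pi>: "shift_perm (a - 1) \<pi>" "vlam (G \<circ> \<pi>) (a - 1) = best_vlam G (a - 1)"
    using best_vlam_attained by blast
  have "best_vlam G (a - 1) + card C \<le> vlam (G \<circ> \<pi>) (a - 1) + lam (ominus (G b) (\<Union>j\<in>{1..<a}. G j))"
    using \<pi>(2) card_le_lam_ominus[OF assms(3-6)] by simp
  also have "\<dots> \<le> vlam (G \<circ> (bring_forward a b \<circ> \<pi>)) b"
    using vlam_bring_forward[OF \<pi>(1) assms(1,2)] .
  also have "\<dots> \<le> best_vlam G b"
    using vlam_le_best_vlam shift_perm_bring_forward[OF \<pi>(1) assms(1,2)] .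
  finally show ?thesis .
qed

lemma comps_nonempty:
  assumes "G \<subseteq> PathZ" "C \<in> comps G"
  shows "C \<noteq> {}"
proof -
  obtain x where "x \<in> verts G" "C = component G x" using assms(2) by (auto simp: comps_eq)
  then have "x \<in> verts C" using mem_verts_component[OF assms(1)] by blast
  then show ?thesis by (auto simp: verts_def)
qed

lemma vertex_near_reduced_component:
  assumes paths: "\<And>j. j \<in> {1..m} \<Longrightarrow> finite (G j) \<and> G j \<subseteq> PathZ"
  shows "T \<in> {1..m} \<Longrightarrow> v \<in> verts (G T) \<Longrightarrow> v \<notin> verts (\<Union>j\<in>{1..<T}. G j) \<Longrightarrow>
    \<exists>j\<in>{1..m}. \<exists>C\<in>comps (G j). C \<in> comps (\<Union>j\<in>{1..m}. reduced G j) \<and>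
      \<bar>real_of_int v - midpt C\<bar> \<le> real (best_vlam G T + best_vlam G (T - 1)) + real (card C) / 2"
proof (induction T arbitrary: v rule: less_induct)
  case (less T)
  have fin: "finite (G T)" and path: "G T \<subseteq> PathZ" using paths less.prems(1) by auto
  define C where "C = component (G T) v"
  have C: "C \<in> comps (G T)" and vC: "v \<in> verts C"
    using component_in_comps[OF less.prems(2)] mem_verts_component[OF path less.prems(2)]
    by (auto simp: C_def)
  show ?case
  proof (cases "\<exists>i\<in>{1..<T}. verts C \<inter> verts (G i) \<noteq> {}")
    case False
    then have "verts C \<inter> verts (\<Union>j\<in>{1..<T}. G j) = {}" by (auto simp: verts_UN)
    then have "C \<in> comps (\<Union>j\<in>{1..m}. reduced G j)"
      using comps_reduced_union[of m G, OF _ less.prems(1) C] paths by blast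
    moreover have "\<bar>real_of_int v - midpt C\<bar> \<le> real (card C) / 2"
      using dist_midpt_le[OF path fin C vC] .
    ultimately show ?thesis using less.prems(1) C by force
  next
    case True
    then obtain T' where T': "T' \<in> {1..<T}" "verts C \<inter> verts (G T') \<noteq> {}"
      and first: "\<And>i. i < T' \<Longrightarrow> \<not> (i \<in> {1..<T} \<and> verts C \<inter> verts (G i) \<noteq> {})"
      using exists_least_iff[of "\<lambda>i. i \<in> {1..<T} \<and> verts C \<inter> verts (G i) \<noteq> {}"] by blast
    then obtain v' where v': "v' \<in> verts C" "v' \<in> verts (G T')" by blast
    have C_new: "verts C \<inter> verts (\<Union>j\<in>{1..<T'}. G j) = {}"
      using first T'(1) by (fastforce simp: verts_UN)
    then have "v' \<notin> verts (\<Union>j\<in>{1..<T'}. G j)" using v'(1) by blast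
    moreover have "T' < T" "T' \<in> {1..m}" using T'(1) less.prems(1) by auto
    ultimately obtain j C' where C': "j \<in> {1..m}" "C' \<in> comps (G j)"
        "C' \<in> comps (\<Union>j\<in>{1..m}. reduced G j)"
      and near': "\<bar>real_of_int v' - midpt C'\<bar>
        \<le> real (best_vlam G T' + best_vlam G (T' - 1)) + real (card C') / 2"
      using less.IH v'(2) by blast
    have "\<bar>v - v'\<bar> \<le> int (card C)" using dist_le_card_comp[OF path fin C vC v'(1)] .
    moreover have "best_vlam G (T' - 1) + card C \<le> best_vlam G T"
      using best_vlam_bring_forward[OF _ _ path fin C C_new] T'(1) by simp
    moreover have "best_vlam G T' \<le> best_vlam G (T - 1)"
      using T'(1) by (intro best_vlam_mono) auto
    ultimately have "\<bar>real_of_int v - midpt C'\<bar>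
        \<le> real (best_vlam G T + best_vlam G (T - 1)) + real (card C') / 2"
      using near' by linarith
    with C' show ?thesis by blast
  qed
qed

lemma exists_first_covering:
  assumes "v \<in> verts (\<Union>j\<in>{1..m::nat}. G j)"
  shows "\<exists>T\<in>{1..m}. v \<in> verts (G T) \<and> v \<notin> verts (\<Union>j\<in>{1..<T}. G j)"
proof -
  have "\<exists>T. T \<in> {1..m} \<and> v \<in> verts (G T)" using assms by (auto simp: verts_UN)
  then obtain T where "T \<in> {1..m}" "v \<in> verts (G T)"
    and "\<And>j. j < T \<Longrightarrow> \<not> (j \<in> {1..m} \<and> v \<in> verts (G j))"
    using exists_least_iff[of "\<lambda>T. T \<in> {1..m} \<and> v \<in> verts (G T)"] by blast
  then show ?thesis by (auto simp: verts_UN)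
qed

lemma exists_vertex_near:
  assumes "0 < k" "y \<in> {0..real k}"
  shows "\<exists>v\<in>verts (Path_k k). \<bar>real_of_int v - y\<bar> \<le> 1 / 2"
proof
  define v where "v = \<lfloor>y + 1 / 2\<rfloor>"
  show "\<bar>real_of_int v - y\<bar> \<le> 1 / 2" unfolding v_def by linarith
  have "0 \<le> v" "v \<le> int k" using assms(2) unfolding v_def by (auto intro: floor_le_iff[THEN iffD2])
  then have "\<exists>i. 0 < i \<and> i \<le> int k \<and> v \<in> {i - 1, i}"
    using assms(1) by (intro exI[of _ "max 1 v"]) (auto simp: max_def)
  then show "v \<in> verts (Path_k k)" by (auto simp: verts_def Path_k_def Path_st_def)
qed

lemma gap_le_best_vlam:
  assumes "0 < k"
    and paths: "\<And>j. j \<in> {1..m} \<Longrightarrow> finite (G j) \<and> G j \<subseteq> PathZ"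
    and cover: "(\<Union>j\<in>{1..m}. G j) = Path_k k"
  shows "gap k G m \<le> 2 * real (best_vlam G m) + real (Max (insert 0 ((\<lambda>j. lam (G j)) ` {1..m})))"
    (is "_ \<le> _ + real ?L")
  unfolding gap_def
proof (rule cSUP_least)
  fix y assume "y \<in> {0..real k}"
  then obtain v where v: "v \<in> verts (Path_k k)" and vy: "\<bar>real_of_int v - y\<bar> \<le> 1 / 2"
    using exists_vertex_near assms(1) by blast
  then obtain T where T: "T \<in> {1..m}" "v \<in> verts (G T)" "v \<notin> verts (\<Union>j\<in>{1..<T}. G j)"
    using exists_first_covering cover by metis
  then obtain j C where j: "j \<in> {1..m}" and C: "C \<in> comps (G j)"
    and CR: "C \<in> comps (\<Union>j\<in>{1..m}. reduced G j)"
    and near: "\<bar>real_of_int v - midpt C\<bar> \<le> real (best_vlam G T + best_vlam G (T - 1)) + real (card C) / 2"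
    using vertex_near_reduced_component[OF paths T] by blast
  have "C \<noteq> {}" using paths[OF j] comps_nonempty[OF _ C] by blast
  moreover have "finite C" using paths[OF j] comps_subset[OF C] finite_subset by blast
  ultimately have "1 \<le> card C" by (simp add: Suc_le_eq card_gt_0_iff)
  moreover have "card C \<le> ?L"
    using card_le_lam[OF _ C] paths[OF j] j le_trans by (fastforce intro: Max_ge)
  moreover have "best_vlam G T \<le> best_vlam G m" "best_vlam G (T - 1) \<le> best_vlam G m"
    using T(1) by (auto intro: best_vlam_mono)
  moreover have "(INF C\<in>comps (\<Union>j\<in>{1..m}. reduced G j). \<bar>midpt C - y\<bar>) \<le> \<bar>midpt C - y\<bar>"
    using CR by (intro cINF_lower bdd_belowI[of _ 0]) auto
  ultimately show "(INF C\<in>comps (\<Union>j\<in>{1..m}. reduced G j). \<bar>midpt C - y\<bar>) \<le> 2 * real (best_vlam G m) + real ?L"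
    using near vy by linarith
qed simp

theorem lemma5p9:
  fixes k m :: nat and G :: "nat \<Rightarrow> graph"
  assumes "k > 0"
    and "\<And>j. j \<in> {1..m} \<Longrightarrow> finite (G j) \<and> G j \<subseteq> PathZ"
    and "(\<Union>j\<in>{1..m}. G j) = Path_k k"
  shows "\<exists>\<sigma>. shift_perm m \<sigma> \<and>
    real (vlam (G \<circ> \<sigma>) m) \<ge> (gap k G m - real (Max (insert 0 ((\<lambda>j. lam (G j)) ` {1..m})))) / 2"
proof -
  obtain \<sigma> where "shift_perm m \<sigma>" "vlam (G \<circ> \<sigma>) m = best_vlam G m"
    using best_vlam_attained by blast
  moreover have "gap k G m \<le> 2 * real (best_vlam G m) + real (Max (insert 0 ((\<lambda>j. lam (G j)) ` {1..m})))"
    by (rule gap_le_best_vlam[OF assms])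
  ultimately show ?thesis by auto
qed

end
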